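(* Let $\mathbb{X}\subseteq\mathbb{P}^2$ be a $\Bbbk$-configuration of type $(1,2,\dots,s)$ with $s\ge2$. Then exactly one of the following holds: (i) There are exactly $s+1$ lines containing $s$ points of $\mathbb{X}$, and $\mathbb{X}$ is precisely the set of pairwise intersection points of these $s+1$ lines. (ii) There are exactly $s$ lines containing $s$ points of $\mathbb{X}$; moreover there exist subsets $\mathbb{X}_1,\dots,\mathbb{X}_s$ and lines $\mathbb{L}_1,\dots,\mathbb{L}_s$ defining $\mathbb{X}$ as a $\Bbbk$-configuration of type $(1,\dots,s)$ such that $\mathbb{L}_1,\dots,\mathbb{L}_s$ are exactly these $s$ lines, and for each $i=1,\dots,s$ the set $\mathbb{X}\cap\mathbb{L}_i$ consists of the $s-1$ points $\mathbb{L}_i\cap\mathbb{L}_j$ ($j\ne i$) together with a single point $P_i$ not lying on any $\mathbb{L}_j$ with $j\neq i$. (iii) There are $r$ lines containing $s$ points of $\mathbb{X}$ with $1\le r<s$; moreover there exist subsets $\mathbb{X}_1,\dots,\mathbb{X}_s$ and lines $\mathbb{L}_1,\dots,\mathbb{L}_s$ defining $\mathbb{X}$ as a $\Bbbk$-configuration of type $(1,\dots,s)$ such that none of these $r$ lines passes through the unique point of $\mathbb{X}_1$.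
   Context: $\Bbbk$ is an algebraically closed field. A $\Bbbk$-configuration of type $(d_1,\dots,d_s)$ is a finite set $\mathbb{X}\subseteq\mathbb{P}^2$ for which there exist integers $1\le d_1<\cdots<d_s$, subsets $\mathbb{X}_1,\dots,\mathbb{X}_s$ of $\mathbb{X}$ and distinct lines $\mathbb{L}_1,\dots,\mathbb{L}_s\subseteq\mathbb{P}^2$ such that (1) $\mathbb{X}=\bigcup_{i=1}^s\mathbb{X}_i$; (2) $|\mathbb{X}_i|=d_i$ and $\mathbb{X}_i\subseteq\mathbb{L}_i$ for each $i$; (3) for $1<i\le s$, $\mathbb{L}_i$ contains no point of $\mathbb{X}_j$ for any $j<i$. We say $\mathbb{X}$ is defined by these subsets and lines; such defining data need not be unique. *)

theory Defs
  imports "HOL-Computational_Algebra.Polynomial"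
begin

definition alg_closed :: "'k::field itself \<Rightarrow> bool" where
  "alg_closed _ \<longleftrightarrow> (\<forall>p :: 'k poly. degree p > 0 \<longrightarrow> (\<exists>x. poly p x = 0))"

definition proj_class :: "'k::field \<times> 'k \<times> 'k \<Rightarrow> ('k \<times> 'k \<times> 'k) set" where
  "proj_class v = {(c * fst v, c * fst (snd v), c * snd (snd v)) | c. c \<noteq> 0}"

typedef (overloaded) ('k::field) ppoint = "{proj_class v | v :: 'k \<times> 'k \<times> 'k. v \<noteq> (0, 0, 0)}"
proof -
  have "(1::'k, 0::'k, 0::'k) \<noteq> (0, 0, 0)" by simp
  then show ?thesis by blast
qed

definition on_line :: "'k::field \<times> 'k \<times> 'k \<Rightarrow> 'k ppoint \<Rightarrow> bool" where
  "on_line abc P \<longleftrightarrow> (\<forall>(x, y, z) \<in> Rep_ppoint P.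
      fst abc * x + fst (snd abc) * y + snd (snd abc) * z = 0)"

definition line_of :: "'k::field \<times> 'k \<times> 'k \<Rightarrow> 'k ppoint set" where
  "line_of abc = {P. on_line abc P}"

definition is_line :: "'k::field ppoint set \<Rightarrow> bool" where
  "is_line L \<longleftrightarrow> (\<exists>abc. abc \<noteq> (0, 0, 0) \<and> L = line_of abc)"

definition defines_kconfig ::
  "'k::field ppoint set \<Rightarrow> (nat \<Rightarrow> nat) \<Rightarrow> nat \<Rightarrow> (nat \<Rightarrow> 'k ppoint set) \<Rightarrow> (nat \<Rightarrow> 'k ppoint set) \<Rightarrow> bool"
  where
  "defines_kconfig X d s Xs Ls \<longleftrightarrow>
     finite X \<and> 1 \<le> s \<and> 1 \<le> d 1 \<and> strict_mono_on {1..s} d \<and>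
     X = (\<Union>i\<in>{1..s}. Xs i) \<and>
     (\<forall>i\<in>{1..s}. finite (Xs i) \<and> card (Xs i) = d i \<and> is_line (Ls i) \<and> Xs i \<subseteq> Ls i) \<and>
     inj_on Ls {1..s} \<and>
     (\<forall>i\<in>{1..s}. \<forall>j\<in>{1..s}. j < i \<longrightarrow> Ls i \<inter> Xs j = {})"

definition is_kconfig :: "'k::field ppoint set \<Rightarrow> (nat \<Rightarrow> nat) \<Rightarrow> nat \<Rightarrow> bool" where
  "is_kconfig X d s \<longleftrightarrow> (\<exists>Xs Ls. defines_kconfig X d s Xs Ls)"

end

theory Submission
  imports Defs
begin

text \<open>A line meets Xs j in at most one point unless it is Ls j, and X \<inter> Ls i lies in
  Xs i \<union> ... \<union> Xs s. Counting shows that a full line (one with s points of X) is either some Ls i,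
  i \<ge> 2, meeting every later Xs j exactly once, or a line through the point P1 of Xs 1 meeting
  every Xs j exactly once; at most two full lines pass through P1. If none does, (iii) holds.
  Otherwise we may take Ls 1 full. If all Ls i are full we get (ii), or (i) when a second full
  line passes through P1. If not, let Ls k be the first non-full line: reversing Ls 1, ..., Ls k
  gives a new defining family whose first point is the only point of Xs k off Ls 1, ...,
  Ls (k - 1).
  If Ls 1 is the only full line through P1, this point lies on no full line, giving (iii); if a
  second full line M passes through P1, it lies only on M, and replacing the first line by M
  reduces to the previous case. The number of
  full lines tells the three cases apart.\<close>

section \<open>Lines of the projective plane\<close>

definition dot :: "'k::field \<times> 'k \<times> 'k \<Rightarrow> 'k \<times> 'k \<times> 'k \<Rightarrow> 'k" where
  "dot a v = fst a * fst v + fst (snd a) * fst (snd v) + snd (snd a) * snd (snd v)"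

definition smul :: "'k::field \<Rightarrow> 'k \<times> 'k \<times> 'k \<Rightarrow> 'k \<times> 'k \<times> 'k" where
  "smul c v = (c * fst v, c * fst (snd v), c * snd (snd v))"

definition cross :: "'k::field \<times> 'k \<times> 'k \<Rightarrow> 'k \<times> 'k \<times> 'k \<Rightarrow> 'k \<times> 'k \<times> 'k" where
  "cross u a = (fst (snd u) * snd (snd a) - snd (snd u) * fst (snd a),
                snd (snd u) * fst a - fst u * snd (snd a),
                fst u * fst (snd a) - fst (snd u) * fst a)"

definition coords :: "'k::field ppoint \<Rightarrow> 'k \<times> 'k \<times> 'k" where
  "coords P = (SOME v. v \<noteq> (0, 0, 0) \<and> Rep_ppoint P = proj_class v)"

lemma
  shows coords_nonzero: "coords P \<noteq> (0, 0, 0)"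
    and Rep_ppoint_coords: "Rep_ppoint P = proj_class (coords P)"
proof -
  have "\<exists>v. v \<noteq> (0, 0, 0) \<and> Rep_ppoint P = proj_class v"
    using Rep_ppoint[of P] by blast
  then have "coords P \<noteq> (0, 0, 0) \<and> Rep_ppoint P = proj_class (coords P)"
    unfolding coords_def by (rule someI_ex)
  then show "coords P \<noteq> (0, 0, 0)" "Rep_ppoint P = proj_class (coords P)" by simp_all
qed

lemma proj_class_eq_smul: "proj_class v = {smul c v | c. c \<noteq> 0}"
  unfolding proj_class_def smul_def by simp

lemma dot_smul_right: "dot a (smul c v) = c * dot a v"
  unfolding dot_def smul_def by (simp add: algebra_simps)

lemma dot_smul_left: "dot (smul c a) v = c * dot a v"
  unfolding dot_def smul_def by (simp add: algebra_simps)

lemma smul_smul: "smul c (smul d v) = smul (c * d) v"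
  unfolding smul_def by simp

lemma smul_1: "smul 1 v = v"
  unfolding smul_def by simp

lemma smul_eq_zero_iff: "smul c v = (0, 0, 0) \<longleftrightarrow> c = 0 \<or> v = (0, 0, 0)"
  by (cases v) (auto simp: smul_def)

lemma on_line_iff_dot: "on_line a P \<longleftrightarrow> dot a (coords P) = 0"
proof -
  have "on_line a P \<longleftrightarrow> (\<forall>v \<in> Rep_ppoint P. dot a v = 0)"
    unfolding on_line_def dot_def by (auto simp: case_prod_beta)
  also have "\<dots> \<longleftrightarrow> dot a (coords P) = 0"
  proof
    assume "\<forall>v \<in> Rep_ppoint P. dot a v = 0"
    moreover have "coords P \<in> Rep_ppoint P"
      unfolding Rep_ppoint_coords proj_class_eq_smul by (auto intro!: exI[of _ 1] simp: smul_1)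
    ultimately show "dot a (coords P) = 0" by blast
  qed (auto simp: Rep_ppoint_coords proj_class_eq_smul dot_smul_right)
  finally show ?thesis .
qed

lemma cross_eq_zero_imp_smul:
  assumes "u \<noteq> (0, 0, 0)" "cross u a = (0, 0, 0)"
  shows "\<exists>c. a = smul c u"
proof -
  obtain a1 a2 a3 where a: "a = (a1, a2, a3)" by (cases a) auto
  obtain u1 u2 u3 where u: "u = (u1, u2, u3)" by (cases u) auto
  have e: "u2 * a3 = u3 * a2" "u3 * a1 = u1 * a3" "u1 * a2 = u2 * a1"
    using assms(2) unfolding cross_def a u by auto
  consider "u1 \<noteq> 0" | "u2 \<noteq> 0" | "u3 \<noteq> 0" using assms(1) u by auto
  then show ?thesis
  proof cases
    case 1
    then have "a = smul (a1 / u1) u" unfolding a u smul_def using e by (auto simp: field_simps)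
    then show ?thesis by blast
  next
    case 2
    then have "a = smul (a2 / u2) u" unfolding a u smul_def using e by (auto simp: field_simps)
    then show ?thesis by blast
  next
    case 3
    then have "a = smul (a3 / u3) u" unfolding a u smul_def using e by (auto simp: field_simps)
    then show ?thesis by blast
  qed
qed

lemma cross_cross_eq_zero:
  assumes "dot x v = 0" "dot x w = 0"
  shows "cross (cross v w) x = (0, 0, 0)"
proof -
  obtain x1 x2 x3 where x: "x = (x1, x2, x3)" by (cases x) auto
  obtain v1 v2 v3 where v: "v = (v1, v2, v3)" by (cases v) auto
  obtain w1 w2 w3 where w: "w = (w1, w2, w3)" by (cases w) auto
  have "cross (cross v w) x = (w1 * dot x v - v1 * dot x w, w2 * dot x v - v2 * dot x w,
                               w3 * dot x v - v3 * dot x w)"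
    unfolding cross_def dot_def x v w by (simp add: algebra_simps)
  then show ?thesis using assms by simp
qed

lemma ppoint_eqI:
  assumes "coords Q = smul c (coords P)" "c \<noteq> 0"
  shows "P = Q"
proof -
  have "proj_class (smul c v) = proj_class v" for v :: "'a \<times> 'a \<times> 'a"
  proof -
    have "{smul d (smul c v) | d. d \<noteq> 0} = {smul d v | d. d \<noteq> 0}"
    proof (intro set_eqI iffI)
      fix x assume "x \<in> {smul d (smul c v) | d. d \<noteq> 0}"
      then show "x \<in> {smul d v | d. d \<noteq> 0}" using assms(2) by (auto simp: smul_smul)
    next
      fix x assume "x \<in> {smul d v | d. d \<noteq> 0}"
      then obtain d where "x = smul d v" "d \<noteq> 0" by blast
      then have "x = smul (d / c) (smul c v)" "d / c \<noteq> 0" using assms(2) by (simp_all add: smul_smul)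
      then show "x \<in> {smul d (smul c v) | d. d \<noteq> 0}" by blast
    qed
    then show ?thesis unfolding proj_class_eq_smul .
  qed
  then have "Rep_ppoint Q = Rep_ppoint P" using Rep_ppoint_coords[of P] Rep_ppoint_coords[of Q] assms(1) by simp
  then show ?thesis using Rep_ppoint_inject by blast
qed

lemma line_of_smul: "c \<noteq> 0 \<Longrightarrow> line_of (smul c a) = line_of a"
  unfolding line_of_def on_line_iff_dot by (simp add: dot_smul_left)

text \<open>The line through two distinct points P and Q is the one with normal vector the cross
  product of their coordinates.\<close>
lemma distinct_lines_meet_once:
  assumes L: "is_line L" and M: "is_line M" and "L \<noteq> M"
    and "P \<in> L" "P \<in> M" "Q \<in> L" "Q \<in> M"
  shows "P = Q"
proof (rule ccontr)
  assume "P \<noteq> Q"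
  obtain a where a: "a \<noteq> (0, 0, 0)" "L = line_of a" using L unfolding is_line_def by blast
  obtain b where b: "b \<noteq> (0, 0, 0)" "M = line_of b" using M unfolding is_line_def by blast
  define u where "u = cross (coords P) (coords Q)"
  have u: "u \<noteq> (0, 0, 0)"
  proof
    assume "u = (0, 0, 0)"
    then obtain c where c: "coords Q = smul c (coords P)"
      using cross_eq_zero_imp_smul coords_nonzero unfolding u_def by blast
    then have "c \<noteq> 0" using coords_nonzero[of Q] by (auto simp: smul_eq_zero_iff)
    then show False using ppoint_eqI[OF c] \<open>P \<noteq> Q\<close> by simp
  qed
  have normal: "line_of a = line_of u" if "a \<noteq> (0, 0, 0)" "P \<in> line_of a" "Q \<in> line_of a" for a
  proof -
    have "cross u a = (0, 0, 0)"
      using that unfolding u_def line_of_def on_line_iff_dot by (auto intro: cross_cross_eq_zero)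
    then obtain c where "a = smul c u" using cross_eq_zero_imp_smul[OF u] by blast
    moreover from this have "c \<noteq> 0" using that(1) by (auto simp: smul_eq_zero_iff)
    ultimately show ?thesis by (simp add: line_of_smul)
  qed
  have "L = line_of u" using normal[of a] a assms by simp
  moreover have "M = line_of u" using normal[of b] b assms by simp
  ultimately show False using \<open>L \<noteq> M\<close> by simp
qed

section \<open>Configurations of type (1, ..., s)\<close>

definition full_lines :: "'k::field ppoint set \<Rightarrow> nat \<Rightarrow> 'k ppoint set set" where
  "full_lines X n = {L. is_line L \<and> card (X \<inter> L) = n}"

locale kconfig_1_to_s =
  fixes X :: "'k::field ppoint set" and s :: nat and Xs Ls :: "nat \<Rightarrow> 'k ppoint set"
  assumes defines_kconfig: "defines_kconfig X (\<lambda>i. i) s Xs Ls"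
begin

lemma s_ge_1: "1 \<le> s"
  and finite_X: "finite X"
  and X_eq_UN: "X = (\<Union>i\<in>{1..s}. Xs i)"
  and inj_Ls: "inj_on Ls {1..s}"
  using defines_kconfig unfolding defines_kconfig_def by auto

lemma
  assumes "i \<in> {1..s}"
  shows finite_Xs: "finite (Xs i)"
    and card_Xs: "card (Xs i) = i"
    and is_line_Ls: "is_line (Ls i)"
    and Xs_subset_Ls: "Xs i \<subseteq> Ls i"
    and Xs_subset_X: "Xs i \<subseteq> X"
  using assms defines_kconfig unfolding defines_kconfig_def by auto

lemma Ls_Int_Xs_eq_empty: "i \<in> {1..s} \<Longrightarrow> j \<in> {1..s} \<Longrightarrow> j < i \<Longrightarrow> Ls i \<inter> Xs j = {}"
  using defines_kconfig unfolding defines_kconfig_def by auto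

lemma Xs_disjoint:
  assumes "i \<in> {1..s}" "j \<in> {1..s}" "i \<noteq> j"
  shows "Xs i \<inter> Xs j = {}"
proof (cases "i < j")
  case True
  then show ?thesis using Ls_Int_Xs_eq_empty[of j i] Xs_subset_Ls[of j] assms by blast
next
  case False
  then show ?thesis using Ls_Int_Xs_eq_empty[of i j] Xs_subset_Ls[of i] assms by fastforce
qed

lemma Ls_eq_iff: "i \<in> {1..s} \<Longrightarrow> j \<in> {1..s} \<Longrightarrow> Ls i = Ls j \<longleftrightarrow> i = j"
  using inj_Ls unfolding inj_on_def by blast

lemma X_memE:
  assumes "x \<in> X"
  obtains j where "j \<in> {1..s}" "x \<in> Xs j"
  using assms X_eq_UN by blast

lemma card_Int_Xs_le_1:
  assumes "is_line L" "j \<in> {1..s}" "L \<noteq> Ls j"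
  shows "card (L \<inter> Xs j) \<le> 1"
  using assms distinct_lines_meet_once[OF assms(1) is_line_Ls[OF assms(2)] assms(3)]
    Xs_subset_Ls[OF assms(2)] finite_Xs[OF assms(2)]
  by (auto simp: card_le_Suc0_iff_eq)

lemma card_X_Int: "card (X \<inter> L) = (\<Sum>j\<in>{1..s}. card (L \<inter> Xs j))"
proof -
  have "X \<inter> L = (\<Union>j\<in>{1..s}. L \<inter> Xs j)" using X_eq_UN by blast
  also have "card \<dots> = (\<Sum>j\<in>{1..s}. card (L \<inter> Xs j))"
  proof (rule card_UN_disjoint)
    show "\<forall>i\<in>{1..s}. \<forall>j\<in>{1..s}. i \<noteq> j \<longrightarrow> L \<inter> Xs i \<inter> (L \<inter> Xs j) = {}"
      using Xs_disjoint by blast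
  qed (simp_all add: finite_Xs)
  finally show ?thesis .
qed

text \<open>Ls i misses the earlier Xs j, contains Xs i and meets each later Xs j at most once. These
  bounds add up to s, so a full Ls i attains all of them.\<close>
lemma card_Ls_Int_later_Xs:
  assumes i: "i \<in> {1..s}" and full: "Ls i \<in> full_lines X s" and j: "j \<in> {1..s}" "i < j"
  shows "card (Ls i \<inter> Xs j) = 1"
proof -
  define bound where "bound j' = (if j' = i then i else 0) + (if i < j' then 1 else 0)" for j' :: nat
  have le: "card (Ls i \<inter> Xs j') \<le> bound j'" if j': "j' \<in> {1..s}" for j'
  proof -
    consider "j' < i" | "j' = i" | "i < j'" by linarith
    then show ?thesis
    proof cases
      case 1 then show ?thesis using Ls_Int_Xs_eq_empty[OF i j'] by (simp add: bound_def)
    next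
      case 2 then show ?thesis using card_Xs[OF i] Xs_subset_Ls[OF i]
        by (simp add: bound_def Int_absorb1)
    next
      case 3 then show ?thesis using card_Int_Xs_le_1[OF is_line_Ls[OF i] j'] Ls_eq_iff[OF i j']
        by (simp add: bound_def)
    qed
  qed
  have "sum bound {1..s} = (\<Sum>j'\<in>{1..s}. if j' = i then i else 0) + card ({1..s} \<inter> {i<..})"
    by (simp add: bound_def sum.distrib sum.If_cases greaterThan_def)
  also have "\<dots> = s"
  proof -
    have "{1..s} \<inter> {i<..} = {i<..s}" using i by auto
    then show ?thesis using i by simp
  qed
  also have "\<dots> = (\<Sum>j'\<in>{1..s}. card (Ls i \<inter> Xs j'))"
    using i full card_X_Int[of "Ls i"] by (simp add: full_lines_def)
  finally have "card (Ls i \<inter> Xs j) = bound j"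
    using sum_mono_inv[of "\<lambda>j'. card (Ls i \<inter> Xs j')" "{1..s}" bound, OF _ le j(1)] by simp
  then show ?thesis using j by (simp add: bound_def)
qed

lemma card_other_full_line_Int_Xs:
  assumes full: "L \<in> full_lines X s" and other: "L \<notin> Ls ` {1..s}" and j: "j \<in> {1..s}"
  shows "card (L \<inter> Xs j) = 1"
proof -
  have line: "is_line L" using full by (simp add: full_lines_def)
  have le: "card (L \<inter> Xs j') \<le> 1" if "j' \<in> {1..s}" for j'
    using card_Int_Xs_le_1[OF line that] other that by blast
  have "(\<Sum>j'\<in>{1..s}. card (L \<inter> Xs j')) = (\<Sum>j'\<in>{1..s}. 1)"
    using full card_X_Int[of L] by (simp add: full_lines_def)
  then show ?thesis using sum_mono_inv[OF _ le j] by simp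
qed

lemma Ls_s_full: "Ls s \<in> full_lines X s"
proof -
  have s: "s \<in> {1..s}" using s_ge_1 by simp
  have "X \<inter> Ls s = Xs s"
  proof
    show "X \<inter> Ls s \<subseteq> Xs s"
    proof
      fix x assume x: "x \<in> X \<inter> Ls s"
      then have "x \<in> X" by simp
      then obtain j where j: "j \<in> {1..s}" "x \<in> Xs j" by (rule X_memE)
      then have "j = s" using Ls_Int_Xs_eq_empty[OF s j(1)] x by (cases "j < s") auto
      then show "x \<in> Xs s" using j by simp
    qed
  qed (use Xs_subset_X[OF s] Xs_subset_Ls[OF s] in blast)
  then show ?thesis using is_line_Ls[OF s] card_Xs[OF s] by (simp add: full_lines_def)
qed

lemma Xs_1_singleton: obtains P1 where "Xs 1 = {P1}"
  using card_Xs[of 1] s_ge_1 by (auto simp: card_1_singleton_iff)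

lemma first_point_not_on_later_Ls: "Xs 1 = {P1} \<Longrightarrow> i \<in> {2..s} \<Longrightarrow> P1 \<notin> Ls i"
  using Ls_Int_Xs_eq_empty[of i 1] by auto

lemma line_through_first_point_not_Ls:
  assumes "Xs 1 = {P1}" "P1 \<in> L" "L \<noteq> Ls 1"
  shows "L \<notin> Ls ` {1..s}"
proof
  assume "L \<in> Ls ` {1..s}"
  then obtain i where "i \<in> {1..s}" "L = Ls i" by blast
  then show False
    using assms first_point_not_on_later_Ls[OF assms(1), of i] by (cases "i = 1") auto
qed

lemma full_line_cases:
  assumes full: "L \<in> full_lines X s" and P1: "Xs 1 = {P1}"
  shows "(\<exists>i\<in>{2..s}. L = Ls i) \<or> P1 \<in> L"
proof (cases "L \<in> Ls ` {1..s}")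
  case True
  then obtain i where "i \<in> {1..s}" "L = Ls i" by blast
  then show ?thesis using Xs_subset_Ls[of 1] P1 by (cases "i = 1") auto
next
  case False
  then show ?thesis
    using card_other_full_line_Int_Xs[OF full False, of 1] s_ge_1 P1 by (auto simp: card_1_singleton_iff)
qed

lemma full_Ls_meet_in_Xs:
  assumes a: "a \<in> {1..s}" and b: "b \<in> {1..s}" "a < b" and full: "Ls a \<in> full_lines X s"
    and Q: "Q \<in> Ls a" "Q \<in> Ls b"
  shows "Q \<in> Xs b"
proof -
  obtain e where e: "Ls a \<inter> Xs b = {e}"
    using card_Ls_Int_later_Xs[OF a full b] by (auto simp: card_1_singleton_iff)
  have "Ls a \<noteq> Ls b" using Ls_eq_iff[OF a b(1)] b(2) by simp
  then have "Q = e"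
    using distinct_lines_meet_once[OF is_line_Ls[OF a] is_line_Ls[OF b(1)]] e Q Xs_subset_Ls[OF b(1)]
    by blast
  then show ?thesis using e by blast
qed

text \<open>Each full line Ls a with a < m takes away a different point of Xs m.\<close>
lemma card_Xs_minus_full_Ls:
  assumes m: "m \<in> {1..s}" and full: "\<forall>a\<in>{1..<m}. Ls a \<in> full_lines X s"
  shows "card (Xs m - (\<Union>a\<in>{1..<m}. Ls a)) = 1"
proof -
  define H where "H = (\<Union>a\<in>{1..<m}. Ls a \<inter> Xs m)"
  have "card H = (\<Sum>a\<in>{1..<m}. card (Ls a \<inter> Xs m))"
    unfolding H_def
  proof (rule card_UN_disjoint)
    show "\<forall>a\<in>{1..<m}. \<forall>b\<in>{1..<m}. a \<noteq> b \<longrightarrow> Ls a \<inter> Xs m \<inter> (Ls b \<inter> Xs m) = {}"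
    proof (intro ballI impI)
      have "Ls a \<inter> Ls b \<inter> Xs m = {}" if "a \<in> {1..<m}" "b \<in> {1..<m}" "a < b" for a b
        using full_Ls_meet_in_Xs[of a b] Xs_disjoint[of b m] that m full by fastforce
      then show "Ls a \<inter> Xs m \<inter> (Ls b \<inter> Xs m) = {}"
        if "a \<in> {1..<m}" "b \<in> {1..<m}" "a \<noteq> b" for a b
        using that by (cases "a < b") (auto dest: not_less_iff_gr_or_eq[THEN iffD1])
    qed
  qed (simp_all add: finite_Xs[OF m])
  also have "\<dots> = m - 1"
    using card_Ls_Int_later_Xs[OF _ _ m] full m by simp
  finally have "card H = m - 1" .
  moreover have "Xs m - (\<Union>a\<in>{1..<m}. Ls a) = Xs m - H" "H \<subseteq> Xs m" unfolding H_def by blast+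
  ultimately show ?thesis
    using finite_Xs[OF m] card_Xs[OF m] m by (simp add: card_Diff_subset finite_subset)
qed

lemma other_full_line_meets_Xs:
  assumes full: "L \<in> full_lines X s" and other: "L \<notin> Ls ` {1..s}" and j: "j \<in> {1..s}"
  obtains d where "L \<inter> Xs j = {d}" "\<forall>a\<in>{1..s}. a \<noteq> j \<longrightarrow> d \<notin> Ls a"
proof -
  obtain d where d: "L \<inter> Xs j = {d}"
    using card_other_full_line_Int_Xs[OF full other j] by (auto simp: card_1_singleton_iff)
  have "d \<notin> Ls a" if a: "a \<in> {1..s}" "a \<noteq> j" for a
  proof
    assume "d \<in> Ls a"
    obtain e where e: "L \<inter> Xs a = {e}"
      using card_other_full_line_Int_Xs[OF full other a(1)] by (auto simp: card_1_singleton_iff)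
    have "L \<noteq> Ls a" using other a by auto
    moreover have "is_line L" using full by (simp add: full_lines_def)
    moreover have "e \<in> L" "e \<in> Ls a" "d \<in> L" using e d Xs_subset_Ls[OF a(1)] by auto
    ultimately have "d = e"
      using distinct_lines_meet_once[OF _ is_line_Ls[OF a(1)]] \<open>d \<in> Ls a\<close> by blast
    then show False using Xs_disjoint[OF j a(1)] a(2) d e by auto
  qed
  then show ?thesis using d that by blast
qed

text \<open>Both lines meet Xs 2 in its single point off Ls 1, so they share it and P1.\<close>
lemma full_lines_through_first_point:
  assumes P1: "Xs 1 = {P1}" and full1: "Ls 1 \<in> full_lines X s" and s: "2 \<le> s"
    and L: "L \<in> full_lines X s" "P1 \<in> L" "L \<noteq> Ls 1"
    and M: "M \<in> full_lines X s" "P1 \<in> M" "M \<noteq> Ls 1"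
  shows "L = M"
proof -
  have j: "1 \<in> {1..s}" "2 \<in> {1..s}" using s by auto
  obtain p where p: "Ls 1 \<inter> Xs 2 = {p}"
    using card_Ls_Int_later_Xs[OF j(1) full1 j(2)] by (auto simp: card_1_singleton_iff)
  then have "p \<in> Xs 2" "p \<in> Ls 1" by blast+
  then have "card (Xs 2 - {p}) = 1" using card_Xs[OF j(2)] finite_Xs[OF j(2)] by simp
  then obtain z where z: "Xs 2 - {p} = {z}" by (auto simp: card_1_singleton_iff)
  have meets_z: "N \<inter> Xs 2 = {z}" if N: "N \<in> full_lines X s" "P1 \<in> N" "N \<noteq> Ls 1" for N
  proof -
    obtain d where d: "N \<inter> Xs 2 = {d}" "\<forall>a\<in>{1..s}. a \<noteq> 2 \<longrightarrow> d \<notin> Ls a"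
      using other_full_line_meets_Xs[OF N(1) line_through_first_point_not_Ls[OF P1 N(2,3)] j(2)] .
    then have "d \<in> Xs 2 - {p}" using \<open>p \<in> Ls 1\<close> j(1) by auto
    then show ?thesis using d z by simp
  qed
  have "P1 \<noteq> z" using Xs_disjoint[OF j, simplified] P1 z by auto
  then show ?thesis
    using distinct_lines_meet_once[of L M P1 z] meets_z[OF L] meets_z[OF M] L M
    by (auto simp: full_lines_def)
qed

end

section \<open>Changing the defining lines\<close>

definition points_last_on :: "'a set \<Rightarrow> nat \<Rightarrow> (nat \<Rightarrow> 'a set) \<Rightarrow> nat \<Rightarrow> 'a set" where
  "points_last_on X s Ls i = X \<inter> Ls i - (\<Union>j\<in>{i<..s}. Ls j)"

lemma kconfig_1_to_s_points_last_on:
  assumes "finite X" "1 \<le> s" and lines: "\<forall>i\<in>{1..s}. is_line (Ls i)"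
    and cover: "X \<subseteq> (\<Union>i\<in>{1..s}. Ls i)"
    and card: "\<forall>i\<in>{1..s}. card (points_last_on X s Ls i) = i"
  shows "kconfig_1_to_s X s (points_last_on X s Ls) Ls"
proof -
  let ?Xs = "points_last_on X s Ls"
  have "X \<subseteq> (\<Union>i\<in>{1..s}. ?Xs i)"
  proof
    fix x assume x: "x \<in> X"
    define J where "J = {i\<in>{1..s}. x \<in> Ls i}"
    have "J \<noteq> {}" using x cover unfolding J_def by blast
    moreover have "finite J" unfolding J_def by simp
    ultimately have "Max J \<in> J" "\<forall>j\<in>J. j \<le> Max J" by auto
    then have "x \<in> ?Xs (Max J)" "Max J \<in> {1..s}"
      using x unfolding J_def points_last_on_def by (fastforce simp: not_le[symmetric])+
    then show "x \<in> (\<Union>i\<in>{1..s}. ?Xs i)" by blast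
  qed
  then have cover': "X = (\<Union>i\<in>{1..s}. ?Xs i)" by (auto simp: points_last_on_def)
  have "inj_on Ls {1..s}"
  proof (rule inj_onI, rule ccontr)
    fix a b assume ab: "a \<in> {1..s}" "b \<in> {1..s}" "Ls a = Ls b" "a \<noteq> b"
    have empty: "?Xs (min a b) = {}"
      using ab by (cases "a < b"; force simp: points_last_on_def min_def)
    have "card (?Xs (min a b)) = min a b" "1 \<le> min a b" using card ab by auto
    then show False using empty by simp
  qed
  moreover have "finite (?Xs i)" "?Xs i \<subseteq> Ls i" for i
    using \<open>finite X\<close> by (auto simp: points_last_on_def)
  moreover have "Ls i \<inter> ?Xs j = {}" if "j < i" "i \<in> {1..s}" for i j
    using that by (auto simp: points_last_on_def)
  ultimately show ?thesis
    using assms cover' unfolding kconfig_1_to_s_def defines_kconfig_def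
    by (simp add: strict_mono_on_def)
qed

definition rev_prefix :: "nat \<Rightarrow> (nat \<Rightarrow> 'a) \<Rightarrow> nat \<Rightarrow> 'a" where
  "rev_prefix k f i = (if i \<le> k then f (k + 1 - i) else f i)"

text \<open>For i \<ge> k the first part is empty, by truncated subtraction.\<close>
lemma rev_prefix_image_greaterThanAtMost:
  assumes "k \<le> s"
  shows "rev_prefix k f ` {i<..s} = f ` ({1..<k + 1 - i} \<union> {max i k<..s})"
proof (intro set_eqI iffI)
  fix y assume "y \<in> rev_prefix k f ` {i<..s}"
  then obtain j where j: "j \<in> {i<..s}" "y = rev_prefix k f j" by blast
  show "y \<in> f ` ({1..<k + 1 - i} \<union> {max i k<..s})"
  proof (cases "j \<le> k")
    case True
    then have "k + 1 - j \<in> {1..<k + 1 - i}" using j by auto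
    then show ?thesis using j True by (auto simp: rev_prefix_def)
  next
    case False
    then show ?thesis using j by (auto simp: rev_prefix_def)
  qed
next
  fix y assume "y \<in> f ` ({1..<k + 1 - i} \<union> {max i k<..s})"
  then obtain a where a: "y = f a" "a \<in> {1..<k + 1 - i} \<union> {max i k<..s}" by blast
  show "y \<in> rev_prefix k f ` {i<..s}"
  proof (cases "a \<le> k")
    case True
    then have "rev_prefix k f (k + 1 - a) = y" "k + 1 - a \<in> {i<..s}"
      using a assms by (auto simp: rev_prefix_def)
    then show ?thesis by blast
  next
    case False
    then show ?thesis using a by (auto simp: rev_prefix_def intro!: image_eqI[of _ _ a])
  qed
qed

lemma rev_prefix_image_atLeastAtMost: "k \<le> s \<Longrightarrow> rev_prefix k f ` {1..s} = f ` {1..s}"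
proof -
  assume "k \<le> s"
  moreover have "{0<..s} = {1..s}" by auto
  moreover have "{1..<k + 1 - 0} \<union> {max 0 k<..s} = {1..s}" using \<open>k \<le> s\<close> by auto
  ultimately show ?thesis using rev_prefix_image_greaterThanAtMost[of k s f 0] by simp
qed

context kconfig_1_to_s
begin

lemma points_last_on_Ls:
  assumes i: "i \<in> {1..s}"
  shows "points_last_on X s Ls i = Xs i"
proof
  show "points_last_on X s Ls i \<subseteq> Xs i"
  proof
    fix x assume x: "x \<in> points_last_on X s Ls i"
    then have "x \<in> X" by (simp add: points_last_on_def)
    then obtain j where j: "j \<in> {1..s}" "x \<in> Xs j" by (rule X_memE)
    have "\<not> j < i" using Ls_Int_Xs_eq_empty[OF i j(1)] x j(2) by (auto simp: points_last_on_def)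
    moreover have "\<not> i < j" using x j Xs_subset_Ls[OF j(1)] by (auto simp: points_last_on_def)
    ultimately show "x \<in> Xs i" using j by simp
  qed
  show "Xs i \<subseteq> points_last_on X s Ls i"
  proof
    fix x assume x: "x \<in> Xs i"
    have "x \<notin> Ls j" if "j \<in> {i<..s}" for j
      using Ls_Int_Xs_eq_empty[of j i] that i x by auto
    then show "x \<in> points_last_on X s Ls i"
      using x Xs_subset_X[OF i] Xs_subset_Ls[OF i] by (auto simp: points_last_on_def)
  qed
qed

lemma replace_first_line:
  assumes M: "is_line M" and sub: "Xs 1 \<subseteq> M"
  shows "kconfig_1_to_s X s Xs (Ls(1 := M))"
proof -
  let ?Ls = "Ls(1 := M)"
  obtain P1 where P1: "Xs 1 = {P1}" by (rule Xs_1_singleton)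
  have "M \<notin> Ls ` {2..s}"
    using first_point_not_on_later_Ls[OF P1] sub P1 by auto
  moreover have "inj_on ?Ls {2..s}"
    using inj_on_subset[OF inj_Ls, of "{2..s}"] inj_on_cong[of "{2..s}" ?Ls Ls] by simp
  moreover have "{1..s} = insert 1 {2..s}" using s_ge_1 by auto
  ultimately have "inj_on ?Ls {1..s}" by (simp only:) simp
  moreover have "is_line (?Ls i) \<and> Xs i \<subseteq> ?Ls i" if "i \<in> {1..s}" for i
    using is_line_Ls[OF that] Xs_subset_Ls[OF that] M sub by simp
  moreover have "?Ls i \<inter> Xs j = {}" if "i \<in> {1..s}" "j \<in> {1..s}" "j < i" for i j
    using Ls_Int_Xs_eq_empty[OF that] that by simp
  ultimately show ?thesis
    using defines_kconfig unfolding kconfig_1_to_s_def defines_kconfig_def by blast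
qed

lemma reversed_piece_eq:
  assumes m: "m \<in> {1..k}" and k: "k \<le> s" and full: "\<forall>a\<in>{1..<k}. Ls a \<in> full_lines X s"
  shows "X \<inter> Ls m - (\<Union>a\<in>{1..<m}. Ls a) - (\<Union>j\<in>{k<..s}. Ls j) =
    (Xs m - (\<Union>a\<in>{1..<m}. Ls a)) \<union> (\<Union>j\<in>{m<..k}. Ls m \<inter> Xs j)"
  (is "?L = ?R")
proof
  have ms: "m \<in> {1..s}" using m k by auto
  show "?L \<subseteq> ?R"
  proof
    fix x assume x: "x \<in> ?L"
    then have "x \<in> X" by simp
    then obtain j where j: "j \<in> {1..s}" "x \<in> Xs j" by (rule X_memE)
    have "\<not> j < m" using Ls_Int_Xs_eq_empty[OF ms j(1)] x j(2) by auto
    moreover have "\<not> k < j" using x j Xs_subset_Ls[OF j(1)] by auto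
    ultimately show "x \<in> ?R" using x j by (cases "j = m") auto
  qed
  show "?R \<subseteq> ?L"
  proof
    fix x assume "x \<in> ?R"
    then consider (first) "x \<in> Xs m" "x \<notin> (\<Union>a\<in>{1..<m}. Ls a)"
      | (meet) j where "j \<in> {m<..k}" "x \<in> Ls m" "x \<in> Xs j" by blast
    then show "x \<in> ?L"
    proof cases
      case first
      moreover have "x \<notin> Ls j" if "j \<in> {k<..s}" for j
        using Ls_Int_Xs_eq_empty[of j m] that ms m first(1) by auto
      ultimately show ?thesis using Xs_subset_X[OF ms] Xs_subset_Ls[OF ms] by blast
    next
      case meet
      then have js: "j \<in> {1..s}" using m k by auto
      have "x \<notin> Ls a" if "a \<in> {1..<m}" for a
        using full_Ls_meet_in_Xs[of a m x] Xs_disjoint[OF ms js] that meet m k full by auto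
      moreover have "x \<notin> Ls j'" if "j' \<in> {k<..s}" for j'
        using Ls_Int_Xs_eq_empty[of j' j] that js meet by auto
      ultimately show ?thesis using Xs_subset_X[OF js] meet by blast
    qed
  qed
qed

lemma card_reversed_piece:
  assumes m: "m \<in> {1..k}" and k: "k \<le> s" and full: "\<forall>a\<in>{1..<k}. Ls a \<in> full_lines X s"
  shows "card ((Xs m - (\<Union>a\<in>{1..<m}. Ls a)) \<union> (\<Union>j\<in>{m<..k}. Ls m \<inter> Xs j)) = k + 1 - m"
proof -
  have ms: "m \<in> {1..s}" using m k by auto
  have js: "j \<in> {1..s}" if "j \<in> {m<..k}" for j using that m k by simp
  have "card (\<Union>j\<in>{m<..k}. Ls m \<inter> Xs j) = (\<Sum>j\<in>{m<..k}. card (Ls m \<inter> Xs j))"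
  proof (rule card_UN_disjoint)
    show "\<forall>j\<in>{m<..k}. finite (Ls m \<inter> Xs j)" using finite_Xs[OF js] by blast
    show "\<forall>i\<in>{m<..k}. \<forall>j\<in>{m<..k}. i \<noteq> j \<longrightarrow> Ls m \<inter> Xs i \<inter> (Ls m \<inter> Xs j) = {}"
      using Xs_disjoint[OF js js] by blast
  qed simp
  also have "\<dots> = (\<Sum>j\<in>{m<..k}. 1)"
    using card_Ls_Int_later_Xs[OF ms _ js] full m by (intro sum.cong) auto
  finally have "card (\<Union>j\<in>{m<..k}. Ls m \<inter> Xs j) = k - m" by simp
  moreover have "card (Xs m - (\<Union>a\<in>{1..<m}. Ls a)) = 1"
    using card_Xs_minus_full_Ls[OF ms] full m by simp
  moreover have "(Xs m - (\<Union>a\<in>{1..<m}. Ls a)) \<inter> (\<Union>j\<in>{m<..k}. Ls m \<inter> Xs j) = {}"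
    using Xs_disjoint[OF ms js] by fastforce
  moreover have "finite (\<Union>j\<in>{m<..k}. Ls m \<inter> Xs j)" using finite_Xs[OF js] by blast
  ultimately show ?thesis
    using m finite_Xs[OF ms] by (simp add: card_Un_disjoint Suc_diff_le)
qed

lemma reverse_full_prefix:
  assumes k: "k \<in> {1..s}" and full: "\<forall>a\<in>{1..<k}. Ls a \<in> full_lines X s"
  shows "kconfig_1_to_s X s (points_last_on X s (rev_prefix k Ls)) (rev_prefix k Ls)"
    and "points_last_on X s (rev_prefix k Ls) 1 = Xs k - (\<Union>a\<in>{1..<k}. Ls a)"
proof -
  let ?Ls = "rev_prefix k Ls"
  have ks: "k \<le> s" using k by simp
  have UN: "(\<Union>j\<in>{i<..s}. ?Ls j) = (\<Union>a\<in>{1..<k + 1 - i}. Ls a) \<union> (\<Union>j\<in>{max i k<..s}. Ls j)" for i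
    using arg_cong[OF rev_prefix_image_greaterThanAtMost[OF ks], of Union] by (simp add: image_Un)
  have low: "points_last_on X s ?Ls i =
      (Xs (k + 1 - i) - (\<Union>a\<in>{1..<k + 1 - i}. Ls a)) \<union> (\<Union>j\<in>{k + 1 - i<..k}. Ls (k + 1 - i) \<inter> Xs j)"
    if i: "i \<in> {1..k}" for i
  proof -
    have "?Ls i = Ls (k + 1 - i)" "max i k = k" using i by (simp_all add: rev_prefix_def)
    then have "points_last_on X s ?Ls i =
        X \<inter> Ls (k + 1 - i) - (\<Union>a\<in>{1..<k + 1 - i}. Ls a) - (\<Union>j\<in>{k<..s}. Ls j)"
      unfolding points_last_on_def UN by auto
    moreover have "k + 1 - i \<in> {1..k}" using i by auto
    ultimately show ?thesis using reversed_piece_eq[OF _ ks full] by simp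
  qed
  have card: "\<forall>i\<in>{1..s}. card (points_last_on X s ?Ls i) = i"
  proof
    fix i assume i: "i \<in> {1..s}"
    show "card (points_last_on X s ?Ls i) = i"
    proof (cases "i \<le> k")
      case True
      moreover have "k + 1 - i \<in> {1..k}" using i True by auto
      ultimately show ?thesis using low[of i] card_reversed_piece[OF _ ks full] i by simp
    next
      case False
      then have "points_last_on X s ?Ls i = points_last_on X s Ls i"
        using UN[of i] by (simp add: points_last_on_def rev_prefix_def)
      then show ?thesis using points_last_on_Ls[OF i] card_Xs[OF i] by simp
    qed
  qed
  have img: "?Ls ` {1..s} = Ls ` {1..s}" by (rule rev_prefix_image_atLeastAtMost[OF ks])
  have "\<forall>L\<in>?Ls ` {1..s}. is_line L" unfolding img using is_line_Ls by blast
  then have lines: "\<forall>i\<in>{1..s}. is_line (?Ls i)" by blast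
  have cover: "X \<subseteq> (\<Union>i\<in>{1..s}. ?Ls i)" unfolding img X_eq_UN using Xs_subset_Ls by blast
  show "kconfig_1_to_s X s (points_last_on X s ?Ls) ?Ls"
    by (rule kconfig_1_to_s_points_last_on[OF finite_X s_ge_1 lines cover card])
  show "points_last_on X s ?Ls 1 = Xs k - (\<Union>a\<in>{1..<k}. Ls a)"
    using low[of 1] k by simp
qed

end

section \<open>The three alternatives\<close>

text \<open>Alternatives (i), (ii) and (iii) of the statement, with S = full_lines X s.\<close>

definition pairwise_meets_of_full_lines :: "'k::field ppoint set \<Rightarrow> nat \<Rightarrow> bool" where
  "pairwise_meets_of_full_lines X s \<longleftrightarrow> card (full_lines X s) = s + 1 \<and>
     X = {P. \<exists>L\<in>full_lines X s. \<exists>M\<in>full_lines X s. L \<noteq> M \<and> P \<in> L \<and> P \<in> M}"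

definition full_lines_define_kconfig :: "'k::field ppoint set \<Rightarrow> nat \<Rightarrow> bool" where
  "full_lines_define_kconfig X s \<longleftrightarrow> card (full_lines X s) = s \<and>
     (\<exists>Xs Ls. defines_kconfig X (\<lambda>i. i) s Xs Ls \<and> Ls ` {1..s} = full_lines X s \<and>
        (\<forall>i\<in>{1..s}. \<exists>P. X \<inter> Ls i = {Q. \<exists>j\<in>{1..s}. j \<noteq> i \<and> Q \<in> Ls i \<inter> Ls j} \<union> {P} \<and>
                         (\<forall>j\<in>{1..s}. j \<noteq> i \<longrightarrow> P \<notin> Ls j)))"

definition first_point_off_full_lines :: "'k::field ppoint set \<Rightarrow> nat \<Rightarrow> bool" where
  "first_point_off_full_lines X s \<longleftrightarrow> (\<exists>r. 1 \<le> r \<and> r < s \<and> card (full_lines X s) = r \<and>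
     (\<exists>Xs Ls. defines_kconfig X (\<lambda>i. i) s Xs Ls \<and> (\<forall>L\<in>full_lines X s. \<forall>P\<in>Xs 1. P \<notin> L)))"

context kconfig_1_to_s
begin

lemma first_point_off_full_linesI:
  assumes "finite (full_lines X s)" "card (full_lines X s) < s"
    and "\<forall>L\<in>full_lines X s. \<forall>P\<in>Xs 1. P \<notin> L"
  shows "first_point_off_full_lines X s"
proof -
  have "full_lines X s \<noteq> {}" using Ls_s_full by blast
  then have "1 \<le> card (full_lines X s)" using assms(1) by (simp add: Suc_le_eq card_gt_0_iff)
  then show ?thesis
    using assms defines_kconfig unfolding first_point_off_full_lines_def by (intro exI conjI) auto
qed

lemma card_full_lines_lt:
  assumes sub: "full_lines X s \<subseteq> Ls ` A" and A: "A \<subset> {1..s}"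
  shows "finite (full_lines X s)" "card (full_lines X s) < s"
proof -
  have fin: "finite A" using A finite_subset by auto
  then show "finite (full_lines X s)" using sub finite_subset by blast
  have "card (full_lines X s) \<le> card (Ls ` A)" using sub fin by (simp add: card_mono)
  also have "\<dots> \<le> card A" by (rule card_image_le[OF fin])
  also have "\<dots> < card {1..s}" using psubset_card_mono[OF _ A] by simp
  finally show "card (full_lines X s) < s" by simp
qed

lemma first_nonfull_Ls:
  assumes "\<not> (\<forall>i\<in>{1..s}. Ls i \<in> full_lines X s)"
  obtains k where "k \<in> {1..s}" "Ls k \<notin> full_lines X s" "\<forall>a\<in>{1..<k}. Ls a \<in> full_lines X s"
proof -
  define k where "k = (LEAST k. k \<in> {1..s} \<and> Ls k \<notin> full_lines X s)"
  have "\<exists>k. k \<in> {1..s} \<and> Ls k \<notin> full_lines X s" using assms by blast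
  then have "k \<in> {1..s} \<and> Ls k \<notin> full_lines X s" unfolding k_def by (rule LeastI_ex)
  moreover have "Ls a \<in> full_lines X s" if "a \<in> {1..<k}" for a
    using not_less_Least[of a "\<lambda>k. k \<in> {1..s} \<and> Ls k \<notin> full_lines X s"] that
      \<open>k \<in> {1..s} \<and> _\<close> unfolding k_def by auto
  ultimately show ?thesis using that by blast
qed

lemma meet_of_full_Ls_in_X:
  assumes "a \<in> {1..s}" "b \<in> {1..s}" "a \<noteq> b" "Ls a \<in> full_lines X s" "Ls b \<in> full_lines X s"
    and "Q \<in> Ls a" "Q \<in> Ls b"
  shows "Q \<in> X"
proof (cases "a < b")
  case True
  then show ?thesis using full_Ls_meet_in_Xs[of a b Q] Xs_subset_X[of b] assms by blast
next
  case False
  then have "b < a" using assms(3) by simp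
  then show ?thesis using full_Ls_meet_in_Xs[of b a Q] Xs_subset_X[of a] assms by blast
qed

lemma meet_of_other_full_line_in_X:
  assumes full: "L \<in> full_lines X s" and other: "L \<notin> Ls ` {1..s}" and b: "b \<in> {1..s}"
    and Q: "Q \<in> L" "Q \<in> Ls b"
  shows "Q \<in> X"
proof -
  obtain d where d: "L \<inter> Xs b = {d}" "\<forall>a\<in>{1..s}. a \<noteq> b \<longrightarrow> d \<notin> Ls a"
    by (rule other_full_line_meets_Xs[OF full other b])
  have "is_line L" using full by (simp add: full_lines_def)
  moreover have "L \<noteq> Ls b" using other b by blast
  moreover have "d \<in> L" "d \<in> Ls b" using d Xs_subset_Ls[OF b] by auto
  ultimately have "Q = d" by (rule distinct_lines_meet_once[OF _ is_line_Ls[OF b] _ Q])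
  then show ?thesis using d Xs_subset_X[OF b] by blast
qed

lemma X_Int_full_Ls:
  assumes all: "\<forall>i\<in>{1..s}. Ls i \<in> full_lines X s" and i: "i \<in> {1..s}"
  obtains P where "X \<inter> Ls i = {Q. \<exists>j\<in>{1..s}. j \<noteq> i \<and> Q \<in> Ls i \<inter> Ls j} \<union> {P}"
    "\<forall>j\<in>{1..s}. j \<noteq> i \<longrightarrow> P \<notin> Ls j"
proof -
  let ?U = "\<Union>a\<in>{1..<i}. Ls a"
  have "card (Xs i - ?U) = 1" using card_Xs_minus_full_Ls[OF i] all i by simp
  then obtain P where P: "Xs i - ?U = {P}" by (auto simp: card_1_singleton_iff)
  have P_off: "P \<notin> Ls j" if j: "j \<in> {1..s}" "j \<noteq> i" for j
  proof (cases "j < i")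
    case True
    then have "j \<in> {1..<i}" using j by simp
    moreover have "P \<notin> ?U" using P by blast
    ultimately show ?thesis by blast
  next
    case False
    then show ?thesis using Ls_Int_Xs_eq_empty[OF j(1) i] P j by auto
  qed
  have "X \<inter> Ls i \<subseteq> {Q. \<exists>j\<in>{1..s}. j \<noteq> i \<and> Q \<in> Ls i \<inter> Ls j} \<union> {P}"
  proof
    fix x assume x: "x \<in> X \<inter> Ls i"
    then have "x \<in> X" by simp
    then obtain j where j: "j \<in> {1..s}" "x \<in> Xs j" by (rule X_memE)
    have "\<not> j < i" using Ls_Int_Xs_eq_empty[OF i j(1)] x j by auto
    moreover have "x \<in> Ls j" using j Xs_subset_Ls by blast
    moreover have "x = P" if "j = i" "x \<notin> ?U" using that j P by blast
    moreover have "a \<in> {1..s}" "a \<noteq> i" if "a \<in> {1..<i}" for a using that i by auto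
    ultimately show "x \<in> {Q. \<exists>j\<in>{1..s}. j \<noteq> i \<and> Q \<in> Ls i \<inter> Ls j} \<union> {P}"
      using x j by (cases "j = i") blast+
  qed
  moreover have "{Q. \<exists>j\<in>{1..s}. j \<noteq> i \<and> Q \<in> Ls i \<inter> Ls j} \<subseteq> X \<inter> Ls i"
    using meet_of_full_Ls_in_X[OF i] all i by blast
  moreover have "P \<in> X \<inter> Ls i" using P Xs_subset_X[OF i] Xs_subset_Ls[OF i] by blast
  ultimately show ?thesis using that P_off by blast
qed

lemma full_lines_define_kconfigI:
  assumes all: "\<forall>i\<in>{1..s}. Ls i \<in> full_lines X s" and eq: "full_lines X s = Ls ` {1..s}"
  shows "full_lines_define_kconfig X s"
proof -
  have "card (full_lines X s) = s" using eq card_image[OF inj_Ls] by simp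
  moreover have "\<forall>i\<in>{1..s}. \<exists>P. X \<inter> Ls i = {Q. \<exists>j\<in>{1..s}. j \<noteq> i \<and> Q \<in> Ls i \<inter> Ls j} \<union> {P} \<and>
      (\<forall>j\<in>{1..s}. j \<noteq> i \<longrightarrow> P \<notin> Ls j)"
  proof
    fix i assume "i \<in> {1..s}"
    then obtain P where "X \<inter> Ls i = {Q. \<exists>j\<in>{1..s}. j \<noteq> i \<and> Q \<in> Ls i \<inter> Ls j} \<union> {P}"
      "\<forall>j\<in>{1..s}. j \<noteq> i \<longrightarrow> P \<notin> Ls j" by (rule X_Int_full_Ls[OF all])
    then show "\<exists>P. X \<inter> Ls i = {Q. \<exists>j\<in>{1..s}. j \<noteq> i \<and> Q \<in> Ls i \<inter> Ls j} \<union> {P} \<and>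
      (\<forall>j\<in>{1..s}. j \<noteq> i \<longrightarrow> P \<notin> Ls j)" by blast
  qed
  ultimately show ?thesis
    using defines_kconfig eq unfolding full_lines_define_kconfig_def by blast
qed

lemma pairwise_meets_of_full_linesI:
  assumes P1: "Xs 1 = {P1}" and all: "\<forall>i\<in>{1..s}. Ls i \<in> full_lines X s"
    and M: "M \<in> full_lines X s" "P1 \<in> M" "M \<noteq> Ls 1"
    and eq: "full_lines X s = insert M (Ls ` {1..s})"
  shows "pairwise_meets_of_full_lines X s"
proof -
  let ?meets = "{P. \<exists>L\<in>full_lines X s. \<exists>N\<in>full_lines X s. L \<noteq> N \<and> P \<in> L \<and> P \<in> N}"
  have other: "M \<notin> Ls ` {1..s}" by (rule line_through_first_point_not_Ls[OF P1 M(2,3)])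
  have "card (full_lines X s) = s + 1" using eq other card_image[OF inj_Ls] by simp
  moreover have "?meets \<subseteq> X"
  proof
    fix P assume "P \<in> ?meets"
    then obtain L N where LN: "L \<in> full_lines X s" "N \<in> full_lines X s" "L \<noteq> N" "P \<in> L" "P \<in> N"
      by blast
    then consider "L = M" "N \<in> Ls ` {1..s}" | "N = M" "L \<in> Ls ` {1..s}"
      | "L \<in> Ls ` {1..s}" "N \<in> Ls ` {1..s}" using eq by auto
    then show "P \<in> X"
    proof cases
      case 1
      then show ?thesis using meet_of_other_full_line_in_X[OF M(1) other] LN by blast
    next
      case 2
      then show ?thesis using meet_of_other_full_line_in_X[OF M(1) other] LN by blast
    next
      case 3
      then show ?thesis using meet_of_full_Ls_in_X all LN by blast
    qed
  qed
  moreover have "X \<subseteq> ?meets"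
  proof
    fix x assume "x \<in> X"
    then obtain j where j: "j \<in> {1..s}" "x \<in> Xs j" by (rule X_memE)
    have "\<exists>L\<in>full_lines X s. L \<noteq> Ls j \<and> x \<in> L"
    proof (cases "\<exists>a\<in>{1..<j}. x \<in> Ls a")
      case True
      then obtain a where "a \<in> {1..<j}" "x \<in> Ls a" by blast
      moreover from this have "Ls a \<noteq> Ls j" "Ls a \<in> full_lines X s"
        using Ls_eq_iff[of a j] all j by simp_all
      ultimately show ?thesis by blast
    next
      case False
      have "card (Xs j - (\<Union>a\<in>{1..<j}. Ls a)) = 1"
        using card_Xs_minus_full_Ls[OF j(1)] all j by simp
      then obtain z where z: "Xs j - (\<Union>a\<in>{1..<j}. Ls a) = {z}" by (auto simp: card_1_singleton_iff)
      obtain d where d: "M \<inter> Xs j = {d}" "\<forall>a\<in>{1..s}. a \<noteq> j \<longrightarrow> d \<notin> Ls a"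
        by (rule other_full_line_meets_Xs[OF M(1) other j(1)])
      have "d \<in> {z}" unfolding z[symmetric] using d j by auto
      moreover have "x \<in> {z}" unfolding z[symmetric] using j False by auto
      ultimately have "x = d" by simp
      moreover have "M \<noteq> Ls j" using other j by blast
      ultimately show ?thesis using d(1) M(1) by blast
    qed
    then obtain L where "L \<in> full_lines X s" "L \<noteq> Ls j" "x \<in> L" by blast
    moreover have "Ls j \<in> full_lines X s" "x \<in> Ls j" using all j Xs_subset_Ls[OF j(1)] by auto
    ultimately show "x \<in> ?meets" by blast
  qed
  ultimately show ?thesis unfolding pairwise_meets_of_full_lines_def by (simp add: subset_antisym)
qed

lemma first_point_off_full_lines_by_reversal:
  assumes P1: "Xs 1 = {P1}" and unique: "\<forall>L\<in>full_lines X s. P1 \<in> L \<longrightarrow> L = Ls 1"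
    and k: "k \<in> {1..s}" "Ls k \<notin> full_lines X s" "\<forall>a\<in>{1..<k}. Ls a \<in> full_lines X s"
  shows "\<exists>Xs' Ls'. kconfig_1_to_s X s Xs' Ls' \<and> (\<forall>L\<in>full_lines X s. \<forall>P\<in>Xs' 1. P \<notin> L)"
proof -
  let ?Xs = "points_last_on X s (rev_prefix k Ls)"
  have "P \<notin> L" if L: "L \<in> full_lines X s" and P: "P \<in> ?Xs 1" for L P
  proof
    assume "P \<in> L"
    have Pk: "P \<in> Xs k" "\<forall>a\<in>{1..<k}. P \<notin> Ls a"
      using P reverse_full_prefix(2)[OF k(1,3)] by auto
    from full_line_cases[OF L P1] show False
    proof
      assume "\<exists>i\<in>{2..s}. L = Ls i"
      then obtain i where i: "i \<in> {2..s}" "L = Ls i" by blast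
      then have "\<not> i < k" "i \<noteq> k" using Pk \<open>P \<in> L\<close> k(2) L by auto
      then have "Ls i \<inter> Xs k = {}" using Ls_Int_Xs_eq_empty[of i k] i k(1) by simp
      then show False using Pk \<open>P \<in> L\<close> i by blast
    next
      assume "P1 \<in> L"
      then have "L = Ls 1" using unique L by blast
      then show False using Pk \<open>P \<in> L\<close> k L by (cases "k = 1") auto
    qed
  qed
  then show ?thesis using reverse_full_prefix(1)[OF k(1,3)] by blast
qed

lemma unique_full_line_case:
  assumes P1: "Xs 1 = {P1}" and full1: "Ls 1 \<in> full_lines X s"
    and unique: "\<forall>L\<in>full_lines X s. P1 \<in> L \<longrightarrow> L = Ls 1"
  shows "full_lines_define_kconfig X s \<or> first_point_off_full_lines X s"
proof -
  have sub: "full_lines X s \<subseteq> Ls ` {1..s}"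
    using full_line_cases[OF _ P1] unique s_ge_1 by fastforce
  show ?thesis
  proof (cases "\<forall>i\<in>{1..s}. Ls i \<in> full_lines X s")
    case True
    then have "full_lines X s = Ls ` {1..s}" using sub by blast
    then show ?thesis using full_lines_define_kconfigI[OF True] by blast
  next
    case False
    then obtain k where k: "k \<in> {1..s}" "Ls k \<notin> full_lines X s"
      "\<forall>a\<in>{1..<k}. Ls a \<in> full_lines X s" by (rule first_nonfull_Ls)
    then have "full_lines X s \<subseteq> Ls ` ({1..s} - {k})" using sub by blast
    moreover have "{1..s} - {k} \<subset> {1..s}" using k(1) by blast
    ultimately have "finite (full_lines X s)" "card (full_lines X s) < s"
      by (rule card_full_lines_lt)+
    moreover obtain Xs' Ls' where "kconfig_1_to_s X s Xs' Ls'" "\<forall>L\<in>full_lines X s. \<forall>P\<in>Xs' 1. P \<notin> L"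
      using first_point_off_full_lines_by_reversal[OF P1 unique k] by blast
    ultimately show ?thesis using kconfig_1_to_s.first_point_off_full_linesI by blast
  qed
qed

lemma full_lines_eq_insert:
  assumes P1: "Xs 1 = {P1}" and full1: "Ls 1 \<in> full_lines X s" and s: "2 \<le> s"
    and all: "\<forall>i\<in>{1..s}. Ls i \<in> full_lines X s"
    and M: "M \<in> full_lines X s" "P1 \<in> M" "M \<noteq> Ls 1"
  shows "full_lines X s = insert M (Ls ` {1..s})"
proof
  show "full_lines X s \<subseteq> insert M (Ls ` {1..s})"
  proof
    fix L assume L: "L \<in> full_lines X s"
    show "L \<in> insert M (Ls ` {1..s})"
    proof (cases "P1 \<in> L \<and> L \<noteq> Ls 1")
      case True
      then have "L = M" using full_lines_through_first_point[OF P1 full1 s L _ _ M] by simp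
      then show ?thesis by simp
    next
      case False
      then have "L = Ls 1 \<or> (\<exists>i\<in>{2..s}. L = Ls i)" using full_line_cases[OF L P1] by blast
      then show ?thesis using s by auto
    qed
  qed
  show "insert M (Ls ` {1..s}) \<subseteq> full_lines X s" using all M(1) by auto
qed

text \<open>If some Ls i is not full, reverse Ls 1, ..., Ls k up to the first non-full Ls k and
  replace the new first line by M: the new first point, where M meets Xs k, lies on no other
  full line.\<close>
lemma second_full_line_case:
  assumes P1: "Xs 1 = {P1}" and full1: "Ls 1 \<in> full_lines X s" and s: "2 \<le> s"
    and M: "M \<in> full_lines X s" "P1 \<in> M" "M \<noteq> Ls 1"
  shows "pairwise_meets_of_full_lines X s \<or> full_lines_define_kconfig X s \<or>
    first_point_off_full_lines X s"
proof (cases "\<forall>i\<in>{1..s}. Ls i \<in> full_lines X s")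
  case True
  then show ?thesis
    using pairwise_meets_of_full_linesI[OF P1 True M] full_lines_eq_insert[OF P1 full1 s True M]
    by blast
next
  case False
  then obtain k where k: "k \<in> {1..s}" "Ls k \<notin> full_lines X s"
    "\<forall>a\<in>{1..<k}. Ls a \<in> full_lines X s" by (rule first_nonfull_Ls)
  have k1: "k \<noteq> 1" using k(2) full1 by auto
  let ?Xs = "points_last_on X s (rev_prefix k Ls)" and ?Ls = "(rev_prefix k Ls)(1 := M)"
  have other: "M \<notin> Ls ` {1..s}" by (rule line_through_first_point_not_Ls[OF P1 M(2,3)])
  obtain d where d: "M \<inter> Xs k = {d}" "\<forall>a\<in>{1..s}. a \<noteq> k \<longrightarrow> d \<notin> Ls a"
    by (rule other_full_line_meets_Xs[OF M(1) other k(1)])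
  have config: "kconfig_1_to_s X s ?Xs (rev_prefix k Ls)" by (rule reverse_full_prefix(1)[OF k(1,3)])
  have "d \<in> ?Xs 1" using reverse_full_prefix(2)[OF k(1,3)] d k(1) by auto
  moreover have "card (?Xs 1) = 1" using kconfig_1_to_s.card_Xs[OF config] s by simp
  ultimately have Xs1: "?Xs 1 = {d}" by (auto simp: card_1_singleton_iff)
  have "is_line M" using M(1) by (simp add: full_lines_def)
  then have config': "kconfig_1_to_s X s ?Xs ?Ls"
    using kconfig_1_to_s.replace_first_line[OF config] Xs1 d(1) by blast
  have "L = M" if L: "L \<in> full_lines X s" "d \<in> L" for L
    using full_line_cases[OF L(1) P1]
  proof
    assume "\<exists>i\<in>{2..s}. L = Ls i"
    then obtain i where "i \<in> {2..s}" "L = Ls i" by blast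
    then show ?thesis using d(2) L k by (cases "i = k") auto
  next
    assume "P1 \<in> L"
    then have "L = Ls 1 \<or> L = M" using full_lines_through_first_point[OF P1 full1 s L(1) _ _ M] by blast
    then show ?thesis using d(2) L(2) k1 s by auto
  qed
  then have unique: "\<forall>L\<in>full_lines X s. d \<in> L \<longrightarrow> L = ?Ls 1" unfolding fun_upd_same by blast
  have "?Ls 1 \<in> full_lines X s" using M(1) by simp
  then show ?thesis using kconfig_1_to_s.unique_full_line_case[OF config' Xs1 _ unique] by blast
qed

lemma full_line_through_first_point_case:
  assumes P1: "Xs 1 = {P1}" and full1: "Ls 1 \<in> full_lines X s" and s: "2 \<le> s"
  shows "pairwise_meets_of_full_lines X s \<or> full_lines_define_kconfig X s \<or>
    first_point_off_full_lines X s"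
proof (cases "\<forall>L\<in>full_lines X s. P1 \<in> L \<longrightarrow> L = Ls 1")
  case True
  then show ?thesis using unique_full_line_case[OF P1 full1] by blast
next
  case False
  then obtain M where "M \<in> full_lines X s" "P1 \<in> M" "M \<noteq> Ls 1" by blast
  then show ?thesis by (rule second_full_line_case[OF P1 full1 s])
qed

lemma no_full_line_through_first_point_case:
  assumes P1: "Xs 1 = {P1}" and none: "\<forall>L\<in>full_lines X s. P1 \<notin> L" and s: "2 \<le> s"
  shows "first_point_off_full_lines X s"
proof -
  have "full_lines X s \<subseteq> Ls ` {2..s}" using full_line_cases[OF _ P1] none by blast
  moreover have "{2..s} \<subset> {1..s}" using s by auto
  ultimately have "finite (full_lines X s)" "card (full_lines X s) < s"
    by (rule card_full_lines_lt)+
  then show ?thesis by (rule first_point_off_full_linesI) (use none P1 in simp)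
qed

end

lemma kconfig_1_to_s_cases:
  assumes "kconfig_1_to_s X s Xs Ls" "2 \<le> s"
  shows "pairwise_meets_of_full_lines X s \<or> full_lines_define_kconfig X s \<or>
    first_point_off_full_lines X s"
proof -
  interpret kconfig_1_to_s X s Xs Ls by fact
  obtain P1 where P1: "Xs 1 = {P1}" by (rule Xs_1_singleton)
  show ?thesis
  proof (cases "\<exists>M\<in>full_lines X s. P1 \<in> M")
    case True
    then obtain M where M: "M \<in> full_lines X s" "P1 \<in> M" by blast
    then have config: "kconfig_1_to_s X s Xs (Ls(1 := M))"
      using replace_first_line P1 by (simp add: full_lines_def)
    have "(Ls(1 := M)) 1 \<in> full_lines X s" using M by simp
    then show ?thesis
      by (rule kconfig_1_to_s.full_line_through_first_point_case[OF config P1 _ assms(2)])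
  next
    case False
    then show ?thesis using no_full_line_through_first_point_case[OF P1 _ assms(2)] by blast
  qed
qed

theorem lemma4p1:
  fixes X :: "'k::field ppoint set" and s :: nat
  assumes "alg_closed TYPE('k)"
    and "is_kconfig X (\<lambda>i. i) s"
    and "s \<ge> 2"
  defines "S \<equiv> {L. is_line L \<and> card (X \<inter> L) = s}"
  shows
   "let
      A = (card S = s + 1 \<and> X = {P. \<exists>L\<in>S. \<exists>M\<in>S. L \<noteq> M \<and> P \<in> L \<and> P \<in> M});
      B = (card S = s \<and>
           (\<exists>Xs Ls. defines_kconfig X (\<lambda>i. i) s Xs Ls \<and> Ls ` {1..s} = S \<and>
              (\<forall>i\<in>{1..s}. \<exists>P. X \<inter> Ls i = {Q. \<exists>j\<in>{1..s}. j \<noteq> i \<and> Q \<in> Ls i \<inter> Ls j} \<union> {P} \<and>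
                               (\<forall>j\<in>{1..s}. j \<noteq> i \<longrightarrow> P \<notin> Ls j))));
      C = (\<exists>r. 1 \<le> r \<and> r < s \<and> card S = r \<and>
           (\<exists>Xs Ls. defines_kconfig X (\<lambda>i. i) s Xs Ls \<and> (\<forall>L\<in>S. \<forall>P\<in>Xs 1. P \<notin> L)))
    in (A \<and> \<not> B \<and> \<not> C) \<or> (\<not> A \<and> B \<and> \<not> C) \<or> (\<not> A \<and> \<not> B \<and> C)"
proof -
  obtain Xs Ls where "kconfig_1_to_s X s Xs Ls"
    using assms(2) unfolding is_kconfig_def kconfig_1_to_s_def by blast
  then have "pairwise_meets_of_full_lines X s \<or> full_lines_define_kconfig X s \<or>
      first_point_off_full_lines X s"
    using kconfig_1_to_s_cases assms(3) by blast
  moreover have "pairwise_meets_of_full_lines X s \<Longrightarrow> card (full_lines X s) = s + 1"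
    "full_lines_define_kconfig X s \<Longrightarrow> card (full_lines X s) = s"
    "first_point_off_full_lines X s \<Longrightarrow> card (full_lines X s) < s"
    unfolding pairwise_meets_of_full_lines_def full_lines_define_kconfig_def
      first_point_off_full_lines_def by auto
  ultimately have "(pairwise_meets_of_full_lines X s \<and> \<not> full_lines_define_kconfig X s \<and>
        \<not> first_point_off_full_lines X s) \<or>
      (\<not> pairwise_meets_of_full_lines X s \<and> full_lines_define_kconfig X s \<and>
        \<not> first_point_off_full_lines X s) \<or>
      (\<not> pairwise_meets_of_full_lines X s \<and> \<not> full_lines_define_kconfig X s \<and>
        first_point_off_full_lines X s)"
    by force
  then show ?thesis
    unfolding Let_def S_def pairwise_meets_of_full_lines_def full_lines_define_kconfig_def
      first_point_off_full_lines_def full_lines_def .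
qed

end
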